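(* A tree $T$ satisfies $D(T)=\dim(T)+1$ if and only if $T$ is isomorphic to $P_n$ or to $K_{1,n}$ for some $n\ge 2$.
   Context: All graphs are finite and simple; $P_n$ is the path on $n$ vertices and $K_{1,n}$ the star with $n$ leaves. For a connected graph $G$ with shortest-path distance $d_G$, a set $S\subseteq V(G)$ is resolving if for any two distinct vertices $x,y$ there is $s\in S$ with $d_G(x,s)\neq d_G(y,s)$; the metric dimension $\dim(G)$ is the minimum size of a resolving set. A distinguishing coloring of a graph $G$ is a (not necessarily proper) vertex coloring such that the only automorphism of $G$ mapping every vertex to a vertex of the same color is the identity; the distinguishing number $D(G)$ is the minimum number of colors in a distinguishing coloring of $G$. *)

theory Defs
  imports Main
begin

definition simple_graph :: "'a set \<Rightarrow> ('a \<Rightarrow> 'a \<Rightarrow> bool) \<Rightarrow> bool" where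
  "simple_graph V E \<longleftrightarrow> finite V \<and>
     (\<forall>x y. E x y \<longrightarrow> x \<in> V \<and> y \<in> V \<and> x \<noteq> y \<and> E y x)"

definition walk :: "'a set \<Rightarrow> ('a \<Rightarrow> 'a \<Rightarrow> bool) \<Rightarrow> 'a list \<Rightarrow> bool" where
  "walk V E p \<longleftrightarrow> p \<noteq> [] \<and> set p \<subseteq> V \<and> (\<forall>i. Suc i < length p \<longrightarrow> E (p ! i) (p ! Suc i))"

definition connected_graph :: "'a set \<Rightarrow> ('a \<Rightarrow> 'a \<Rightarrow> bool) \<Rightarrow> bool" where
  "connected_graph V E \<longleftrightarrow> V \<noteq> {} \<and>
     (\<forall>x\<in>V. \<forall>y\<in>V. \<exists>p. walk V E p \<and> hd p = x \<and> last p = y)"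

definition is_cycle :: "'a set \<Rightarrow> ('a \<Rightarrow> 'a \<Rightarrow> bool) \<Rightarrow> 'a list \<Rightarrow> bool" where
  "is_cycle V E c \<longleftrightarrow> walk V E c \<and> length c \<ge> 3 \<and> distinct c \<and> E (last c) (hd c)"

definition is_tree :: "'a set \<Rightarrow> ('a \<Rightarrow> 'a \<Rightarrow> bool) \<Rightarrow> bool" where
  "is_tree V E \<longleftrightarrow> simple_graph V E \<and> connected_graph V E \<and> (\<nexists>c. is_cycle V E c)"

definition gdist :: "'a set \<Rightarrow> ('a \<Rightarrow> 'a \<Rightarrow> bool) \<Rightarrow> 'a \<Rightarrow> 'a \<Rightarrow> nat" where
  "gdist V E x y = (LEAST n. \<exists>p. walk V E p \<and> hd p = x \<and> last p = y \<and> length p = Suc n)"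

definition resolving :: "'a set \<Rightarrow> ('a \<Rightarrow> 'a \<Rightarrow> bool) \<Rightarrow> 'a set \<Rightarrow> bool" where
  "resolving V E S \<longleftrightarrow> S \<subseteq> V \<and>
     (\<forall>x\<in>V. \<forall>y\<in>V. x \<noteq> y \<longrightarrow> (\<exists>s\<in>S. gdist V E x s \<noteq> gdist V E y s))"

definition metric_dim :: "'a set \<Rightarrow> ('a \<Rightarrow> 'a \<Rightarrow> bool) \<Rightarrow> nat" where
  "metric_dim V E = (LEAST k. \<exists>S. resolving V E S \<and> card S = k)"

definition automorphism :: "'a set \<Rightarrow> ('a \<Rightarrow> 'a \<Rightarrow> bool) \<Rightarrow> ('a \<Rightarrow> 'a) \<Rightarrow> bool" where
  "automorphism V E f \<longleftrightarrow> bij_betw f V V \<and> (\<forall>x\<in>V. \<forall>y\<in>V. E x y \<longleftrightarrow> E (f x) (f y))"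

definition distinguishing_coloring ::
  "'a set \<Rightarrow> ('a \<Rightarrow> 'a \<Rightarrow> bool) \<Rightarrow> nat \<Rightarrow> ('a \<Rightarrow> nat) \<Rightarrow> bool" where
  "distinguishing_coloring V E k c \<longleftrightarrow> c ` V \<subseteq> {..<k} \<and>
     (\<forall>f. automorphism V E f \<and> (\<forall>x\<in>V. c (f x) = c x) \<longrightarrow> (\<forall>x\<in>V. f x = x))"

definition distinguishing_number :: "'a set \<Rightarrow> ('a \<Rightarrow> 'a \<Rightarrow> bool) \<Rightarrow> nat" where
  "distinguishing_number V E = (LEAST k. \<exists>c. distinguishing_coloring V E k c)"

definition graph_iso ::
  "'a set \<Rightarrow> ('a \<Rightarrow> 'a \<Rightarrow> bool) \<Rightarrow> 'b set \<Rightarrow> ('b \<Rightarrow> 'b \<Rightarrow> bool) \<Rightarrow> bool" where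
  "graph_iso V E W F \<longleftrightarrow> (\<exists>f. bij_betw f V W \<and> (\<forall>x\<in>V. \<forall>y\<in>V. E x y \<longleftrightarrow> F (f x) (f y)))"

definition path_V :: "nat \<Rightarrow> nat set" where "path_V n = {..<n}"
definition path_E :: "nat \<Rightarrow> nat \<Rightarrow> bool" where "path_E i j \<longleftrightarrow> i = Suc j \<or> j = Suc i"
definition star_V :: "nat \<Rightarrow> nat set" where "star_V n = {0..n}"
definition star_E :: "nat \<Rightarrow> nat \<Rightarrow> bool" where
  "star_E i j \<longleftrightarrow> (i = 0 \<and> j \<noteq> 0) \<or> (j = 0 \<and> i \<noteq> 0)"

end

theory Submission
  imports Defs "HOL-Combinatorics.Transposition"
begin

text \<open>
  For paths and stars both invariants are computed directly. Conversely let T be neither and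
  let S be a metric basis; |S| \<ge> 2 because a single resolving vertex lays T out as a path.
  An automorphism fixing S pointwise is the identity, so colouring S - {s0} injectively and all
  other vertices with one further colour is distinguishing with |S| colours, unless some
  automorphism moves s0 off S. Letting s0 (and possibly one more vertex u) share the colour of
  s1 also works if s0 and s1 differ in degree, or if u has another degree and is at different
  distances from s0 and s1. Otherwise all of S has one degree and every vertex of another
  degree is equidistant from S. That degree is 1, since otherwise a leaf lying behind s0 as seen
  from s1 separates them. So S consists of leaves, which then all hang at one vertex u, and the
  vertices outside S are separated by their distance to u; an automorphism moving s0 off S
  forces T to be the star centred at u.
\<close>

section \<open>Walks\<close>

lemma walk_singleton [simp]: "walk V E [x] \<longleftrightarrow> x \<in> V"
  by (auto simp: walk_def)

lemma walk_Cons_Cons [simp]: "walk V E (x # y # p) \<longleftrightarrow> x \<in> V \<and> E x y \<and> walk V E (y # p)"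
  unfolding walk_def by (auto simp: nth_Cons split: nat.splits)

lemma walk_not_Nil: "walk V E p \<Longrightarrow> p \<noteq> []"
  by (simp add: walk_def)

lemma walk_set: "walk V E p \<Longrightarrow> set p \<subseteq> V"
  by (simp add: walk_def)

lemma walk_drop: "walk V E p \<Longrightarrow> i < length p \<Longrightarrow> walk V E (drop i p)"
  unfolding walk_def by (auto dest: in_set_dropD)

lemma walk_take: "walk V E p \<Longrightarrow> 0 < j \<Longrightarrow> walk V E (take j p)"
  unfolding walk_def by (auto dest: in_set_takeD)

lemma walk_append:
  "walk V E p \<Longrightarrow> walk V E q \<Longrightarrow> E (last p) (hd q) \<Longrightarrow> walk V E (p @ q)"
proof (induction p rule: induct_list012)
  case 1
  then show ?case by (simp add: walk_def)
next
  case (2 x)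
  then show ?case by (cases q) auto
qed auto

lemma last_append_tl: "p \<noteq> [] \<Longrightarrow> q \<noteq> [] \<Longrightarrow> last p = hd q \<Longrightarrow> last (p @ tl q) = last q"
  by (cases q) auto

lemma walk_join:
  assumes "walk V E p" "walk V E q" "last p = hd q"
  shows "walk V E (p @ tl q)"
proof (cases "tl q")
  case (Cons a r)
  with assms obtain b where "q = b # a # r" by (cases q) (auto simp: walk_def)
  with assms show ?thesis using walk_append[OF assms(1), of "a # r"] by auto
qed (use assms in simp)

lemma walk_rev:
  assumes "\<And>x y. x \<in> V \<Longrightarrow> y \<in> V \<Longrightarrow> E x y \<Longrightarrow> E y x" and "walk V E p"
  shows "walk V E (rev p)"
  using assms(2)
proof (induction p rule: induct_list012)
  case (3 x y zs)
  then have "walk V E (rev (y # zs))" "x \<in> V" "y \<in> V" "E y x"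
    using assms(1) walk_set[OF 3(3)] by auto
  then show ?case using walk_append[of V E "rev (y # zs)" "[x]"] by simp
qed simp_all

lemma connected_if_root:
  assumes sym: "\<And>x y. x \<in> V \<Longrightarrow> y \<in> V \<Longrightarrow> E x y \<Longrightarrow> E y x"
    and root: "\<And>x. x \<in> V \<Longrightarrow> \<exists>p. walk V E p \<and> hd p = r \<and> last p = x"
    and "x \<in> V" "y \<in> V"
  shows "\<exists>p. walk V E p \<and> hd p = x \<and> last p = y"
proof -
  obtain p q where p: "walk V E p" "hd p = r" "last p = x" and q: "walk V E q" "hd q = r" "last q = y"
    using root assms(3,4) by blast
  have "p \<noteq> []" "q \<noteq> []" using p(1) q(1) walk_not_Nil by auto
  then have "walk V E (rev p @ tl q)" "hd (rev p @ tl q) = x" "last (rev p @ tl q) = y"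
    using walk_join[OF walk_rev[OF sym p(1)] q(1)] p q
    by (auto simp: hd_rev last_rev last_append_tl)
  then show ?thesis by blast
qed

lemma first_common_element:
  assumes "set xs \<inter> set ys \<noteq> {}" "distinct ys"
  obtains as b cs us vs where "xs = as @ b # cs" "ys = us @ b # vs" "set (as @ [b]) \<inter> set us = {}"
proof -
  obtain as b cs where xs: "xs = as @ b # cs" "b \<in> set ys" "\<forall>a\<in>set as. a \<notin> set ys"
    using split_list_first_propE[of xs "\<lambda>a. a \<in> set ys"] assms(1) by blast
  then obtain us vs where ys: "ys = us @ b # vs" using split_list by metis
  then have "set (as @ [b]) \<inter> set us = {}" using xs(3) assms(2) by auto
  with xs ys that show ?thesis by blast
qed

section \<open>Isomorphisms and automorphisms\<close>

definition graph_isomorphism ::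
  "'a set \<Rightarrow> ('a \<Rightarrow> 'a \<Rightarrow> bool) \<Rightarrow> 'b set \<Rightarrow> ('b \<Rightarrow> 'b \<Rightarrow> bool) \<Rightarrow> ('a \<Rightarrow> 'b) \<Rightarrow> bool" where
  "graph_isomorphism V E W F f \<longleftrightarrow> bij_betw f V W \<and> (\<forall>x\<in>V. \<forall>y\<in>V. E x y \<longleftrightarrow> F (f x) (f y))"

lemma graph_iso_iff: "graph_iso V E W F \<longleftrightarrow> (\<exists>f. graph_isomorphism V E W F f)"
  by (simp add: graph_iso_def graph_isomorphism_def)

lemma automorphism_iff_graph_isomorphism: "automorphism V E f \<longleftrightarrow> graph_isomorphism V E V E f"
  by (simp add: automorphism_def graph_isomorphism_def)

lemma walk_map: "graph_isomorphism V E W F f \<Longrightarrow> walk V E p \<Longrightarrow> walk W F (map f p)"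
proof (induction p rule: induct_list012)
  case 1
  then show ?case by (simp add: walk_def)
next
  case (2 x)
  then show ?case by (auto simp: graph_isomorphism_def bij_betw_def)
next
  case (3 x y zs)
  then have "y \<in> V" by (auto simp: walk_def)
  with 3 show ?case by (auto simp: graph_isomorphism_def bij_betw_def)
qed

lemma graph_isomorphism_inv:
  assumes "graph_isomorphism V E W F f"
  shows "graph_isomorphism W F V E (inv_into V f)"
proof -
  have f: "bij_betw f V W" and e: "\<forall>x\<in>V. \<forall>y\<in>V. E x y \<longleftrightarrow> F (f x) (f y)"
    using assms by (auto simp: graph_isomorphism_def)
  have "F x y \<longleftrightarrow> E (inv_into V f x) (inv_into V f y)" if "x \<in> W" "y \<in> W" for x y
    using e bij_betw_inv_into_right[OF f] bij_betwE[OF bij_betw_inv_into[OF f]] that by metis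
  with bij_betw_inv_into[OF f] show ?thesis by (simp add: graph_isomorphism_def)
qed

lemma graph_isomorphism_comp:
  "graph_isomorphism U D V E f \<Longrightarrow> graph_isomorphism V E W F g \<Longrightarrow> graph_isomorphism U D W F (g \<circ> f)"
  unfolding graph_isomorphism_def by (auto intro: bij_betw_trans simp: bij_betw_def comp_inj_on)

lemma gdist_graph_isomorphism:
  assumes f: "graph_isomorphism V E W F f" and "x \<in> V" "y \<in> V"
  shows "gdist W F (f x) (f y) = gdist V E x y"
proof -
  let ?g = "inv_into V f"
  have gf: "\<And>v. v \<in> V \<Longrightarrow> ?g (f v) = v"
    using f by (simp add: graph_isomorphism_def bij_betw_def)
  have walk_to: "\<exists>q. walk V' E' q \<and> hd q = h a \<and> last q = h b \<and> length q = Suc n"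
    if "graph_isomorphism V E V' E' h" "walk V E p" "hd p = a" "last p = b" "length p = Suc n"
    for V' :: "'c set" and E' h V E p a b n
    using that walk_map[OF that(1,2)] walk_not_Nil[OF that(2)]
    by (intro exI[of _ "map h p"]) (auto simp: hd_map last_map)
  have "(\<exists>p. walk W F p \<and> hd p = f x \<and> last p = f y \<and> length p = Suc n) \<longleftrightarrow>
        (\<exists>p. walk V E p \<and> hd p = x \<and> last p = y \<and> length p = Suc n)" for n
    using walk_to[OF f, of _ x y n] walk_to[OF graph_isomorphism_inv[OF f], of _ "f x" "f y" n]
      gf assms(2,3) by auto
  then show ?thesis unfolding gdist_def by simp
qed

lemma resolving_image:
  assumes f: "graph_isomorphism V E W F f" and S: "resolving V E S"
  shows "resolving W F (f ` S)" and "card (f ` S) = card S"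
proof -
  have b: "bij_betw f V W" using f by (simp add: graph_isomorphism_def)
  have SV: "S \<subseteq> V" using S by (simp add: resolving_def)
  show "card (f ` S) = card S"
    using b SV by (intro card_image) (auto simp: bij_betw_def intro: inj_on_subset)
  show "resolving W F (f ` S)" unfolding resolving_def
  proof (intro conjI ballI impI)
    show "f ` S \<subseteq> W" using SV b by (auto simp: bij_betw_def)
    fix x' y' assume "x' \<in> W" "y' \<in> W" "x' \<noteq> y'"
    then obtain x y where xy: "x \<in> V" "y \<in> V" "x' = f x" "y' = f y" "x \<noteq> y"
      using b by (auto simp: bij_betw_def)
    then obtain s where s: "s \<in> S" "gdist V E x s \<noteq> gdist V E y s"
      using S unfolding resolving_def by blast
    then show "\<exists>s\<in>f ` S. gdist W F x' s \<noteq> gdist W F y' s"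
      using gdist_graph_isomorphism[OF f] xy SV by (intro bexI[of _ "f s"]) auto
  qed
qed

lemma metric_dim_graph_iso:
  assumes "graph_iso V E W F"
  shows "metric_dim V E = metric_dim W F"
proof -
  obtain f where f: "graph_isomorphism V E W F f" using assms graph_iso_iff by blast
  note g = graph_isomorphism_inv[OF f]
  have "(\<exists>S. resolving V E S \<and> card S = k) \<longleftrightarrow> (\<exists>T. resolving W F T \<and> card T = k)" for k
    using resolving_image[OF f] resolving_image[OF g] by metis
  then show ?thesis unfolding metric_dim_def by simp
qed

lemma distinguishing_coloring_transfer:
  assumes f: "graph_isomorphism V E W F f" and c: "distinguishing_coloring V E k c"
  shows "distinguishing_coloring W F k (c \<circ> inv_into V f)"
proof -
  let ?g = "inv_into V f"
  have b: "bij_betw f V W" using f by (simp add: graph_isomorphism_def)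
  have gb: "bij_betw ?g W V" using bij_betw_inv_into[OF b] .
  have gf: "\<And>x. x \<in> V \<Longrightarrow> ?g (f x) = x" using b by (simp add: bij_betw_def)
  have fg: "\<And>y. y \<in> W \<Longrightarrow> f (?g y) = y" using b by (simp add: bij_betw_inv_into_right)
  show ?thesis unfolding distinguishing_coloring_def
  proof (intro conjI allI impI)
    show "(c \<circ> ?g) ` W \<subseteq> {..<k}"
      using c bij_betw_imp_surj_on[OF gb] by (auto simp: distinguishing_coloring_def)
    fix h assume h: "automorphism W F h \<and> (\<forall>x\<in>W. (c \<circ> ?g) (h x) = (c \<circ> ?g) x)"
    have "graph_isomorphism V E V E (?g \<circ> h \<circ> f)"
      using graph_isomorphism_comp[OF graph_isomorphism_comp[OF f] graph_isomorphism_inv[OF f]] h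
      by (simp add: automorphism_iff_graph_isomorphism comp_assoc)
    moreover have "\<forall>x\<in>V. c ((?g \<circ> h \<circ> f) x) = c x"
      using h gf bij_betwE[OF b] by auto
    ultimately have "\<forall>x\<in>V. ?g (h (f x)) = x"
      using c by (auto simp: distinguishing_coloring_def automorphism_iff_graph_isomorphism)
    then show "\<forall>y\<in>W. h y = y"
      using h fg bij_betwE[OF gb] by (metis automorphism_def bij_betwE)
  qed
qed

lemma distinguishing_number_graph_iso:
  assumes "graph_iso V E W F"
  shows "distinguishing_number V E = distinguishing_number W F"
proof -
  obtain f where f: "graph_isomorphism V E W F f" using assms graph_iso_iff by blast
  note g = graph_isomorphism_inv[OF f]
  have "(\<exists>c. distinguishing_coloring V E k c) \<longleftrightarrow> (\<exists>c. distinguishing_coloring W F k c)" for k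
    using distinguishing_coloring_transfer[OF f] distinguishing_coloring_transfer[OF g] by metis
  then show ?thesis unfolding distinguishing_number_def by simp
qed

lemma automorphism_in: "automorphism V E f \<Longrightarrow> x \<in> V \<Longrightarrow> f x \<in> V"
  by (auto simp: automorphism_def bij_betw_def)

lemma automorphism_eq_iff:
  "automorphism V E f \<Longrightarrow> x \<in> V \<Longrightarrow> y \<in> V \<Longrightarrow> f x = f y \<longleftrightarrow> x = y"
  by (auto simp: automorphism_def bij_betw_def dest: inj_onD)

lemma distinguishing_number_le:
  "distinguishing_coloring V E k c \<Longrightarrow> distinguishing_number V E \<le> k"
  unfolding distinguishing_number_def by (rule Least_le) blast

lemma distinguishing_number_eq_2:
  assumes f: "automorphism V E f" "x \<in> V" "f x \<noteq> x"
    and c: "distinguishing_coloring V E 2 c"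
  shows "distinguishing_number V E = 2"
proof -
  have fewer: "\<not> distinguishing_coloring V E k c'" if "k < 2" for k c'
  proof
    assume c': "distinguishing_coloring V E k c'"
    then have "\<forall>v\<in>V. c' v = 0" using that unfolding distinguishing_coloring_def by auto
    moreover have "\<forall>v\<in>V. f v \<in> V" using automorphism_in[OF f(1)] by blast
    ultimately show False using c' f unfolding distinguishing_coloring_def by auto
  qed
  show ?thesis unfolding distinguishing_number_def
  proof (rule Least_equality)
    show "\<exists>c. distinguishing_coloring V E 2 c" using c by blast
    show "2 \<le> k" if "\<exists>c. distinguishing_coloring V E k c" for k
      using that fewer not_less by blast
  qed
qed

lemma graph_iso_star:
  assumes fin: "finite V" and c: "c \<in> V" and edges: "\<forall>x\<in>V. \<forall>y\<in>V. E x y \<longleftrightarrow> (x = c \<longleftrightarrow> y \<noteq> c)"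
  shows "graph_iso V E (star_V (card V - 1)) star_E"
proof -
  let ?m = "card V - 1"
  have "card (V - {c}) = ?m" using fin c by simp
  then obtain g where g: "bij_betw g (V - {c}) {0..<?m}"
    using ex_bij_betw_finite_nat[of "V - {c}"] fin by auto
  define \<phi> where "\<phi> v = (if v = c then 0 else Suc (g v))" for v
  have "inj_on \<phi> V"
    using bij_betw_imp_inj_on[OF g] by (auto simp: inj_on_def \<phi>_def)
  moreover have "\<phi> ` V = {0..?m}"
  proof -
    have "\<phi> ` V = insert 0 (Suc ` g ` (V - {c}))" using c by (auto simp: \<phi>_def)
    also have "\<dots> = insert 0 (Suc ` {..<?m})"
      using bij_betw_imp_surj_on[OF g] by (simp add: atLeast0LessThan)
    also have "\<dots> = {0..?m}"
      by (auto simp: image_Suc_lessThan)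
    finally show ?thesis .
  qed
  moreover have "\<phi> v = 0 \<longleftrightarrow> v = c" for v by (simp add: \<phi>_def)
  ultimately show ?thesis
    using edges unfolding graph_iso_def star_V_def star_E_def bij_betw_def
    by (intro exI[of _ \<phi>]) auto
qed

section \<open>Connected simple graphs\<close>

locale connected_simple_graph =
  fixes V :: "'a set" and E :: "'a \<Rightarrow> 'a \<Rightarrow> bool"
  assumes finite_V: "finite V"
    and E_sym: "\<And>x y. x \<in> V \<Longrightarrow> y \<in> V \<Longrightarrow> E x y \<Longrightarrow> E y x"
    and E_irrefl: "\<And>x. \<not> E x x"
    and connected: "\<And>x y. x \<in> V \<Longrightarrow> y \<in> V \<Longrightarrow> \<exists>p. walk V E p \<and> hd p = x \<and> last p = y"
begin

abbreviation d :: "'a \<Rightarrow> 'a \<Rightarrow> nat" where "d \<equiv> gdist V E"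

definition deg :: "'a \<Rightarrow> nat" where
  "deg x = card {y\<in>V. E x y}"

lemma shortest_walk_exists:
  assumes "x \<in> V" "y \<in> V"
  obtains p where "walk V E p" "hd p = x" "last p = y" "length p = Suc (d x y)"
proof -
  obtain p where p: "walk V E p" "hd p = x" "last p = y" using connected[OF assms] by blast
  then have "length p = Suc (length p - 1)" using walk_not_Nil by (cases p) auto
  with p have "\<exists>n p. walk V E p \<and> hd p = x \<and> last p = y \<and> length p = Suc n" by blast
  from LeastI_ex[OF this] that show ?thesis unfolding gdist_def by blast
qed

lemma gdist_le_walk:
  assumes "walk V E p" "hd p = x" "last p = y"
  shows "d x y \<le> length p - 1"
proof -
  have "length p = Suc (length p - 1)" using walk_not_Nil[OF assms(1)] by (cases p) auto
  then show ?thesis unfolding gdist_def using assms by (intro Least_le) blast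
qed

lemma gdist_self [simp]: "x \<in> V \<Longrightarrow> d x x = 0"
  using gdist_le_walk[of "[x]" x x] by simp

lemma gdist_eq_0_iff:
  assumes "x \<in> V" "y \<in> V"
  shows "d x y = 0 \<longleftrightarrow> x = y"
proof
  assume "d x y = 0"
  then obtain p where "walk V E p" "hd p = x" "last p = y" "length p = 1"
    using shortest_walk_exists[OF assms] by (metis One_nat_def)
  then show "x = y" by (cases p) auto
qed (use assms in simp)

lemma gdist_commute:
  assumes "x \<in> V" "y \<in> V"
  shows "d x y = d y x"
proof -
  have le: "d a b \<le> d b a" if a: "a \<in> V" and b: "b \<in> V" for a b
  proof -
    obtain p where p: "walk V E p" "hd p = b" "last p = a" "length p = Suc (d b a)"
      using shortest_walk_exists[OF b a] .
    then have "p \<noteq> []" by auto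
    with p show ?thesis
      using gdist_le_walk[OF walk_rev[OF E_sym p(1)]] by (simp add: hd_rev last_rev)
  qed
  show ?thesis using le[OF assms] le[OF assms(2,1)] by simp
qed

lemma gdist_triangle:
  assumes "x \<in> V" "y \<in> V" "z \<in> V"
  shows "d x z \<le> d x y + d y z"
proof -
  obtain p where p: "walk V E p" "hd p = x" "last p = y" "length p = Suc (d x y)"
    using shortest_walk_exists[OF assms(1,2)] .
  obtain q where q: "walk V E q" "hd q = y" "last q = z" "length q = Suc (d y z)"
    using shortest_walk_exists[OF assms(2,3)] .
  have "p \<noteq> []" "q \<noteq> []" using p(4) q(4) by auto
  then have "hd (p @ tl q) = x" "last (p @ tl q) = z"
    using p q by (auto simp: last_append_tl)
  with gdist_le_walk[OF walk_join[OF p(1) q(1)]] p q show ?thesis by simp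
qed

lemma gdist_eq_1_iff:
  assumes "x \<in> V" "y \<in> V"
  shows "d x y = 1 \<longleftrightarrow> E x y"
proof
  assume "d x y = 1"
  then obtain p where "walk V E p" "hd p = x" "last p = y" "length p = 2"
    using shortest_walk_exists[OF assms] by (metis Suc_1)
  then show "E x y" by (cases p; cases "tl p") auto
next
  assume "E x y"
  then have "d x y \<le> 1" "x \<noteq> y"
    using gdist_le_walk[of "[x, y]" x y] assms E_irrefl by auto
  then show "d x y = 1" using gdist_eq_0_iff[OF assms] by linarith
qed

lemma gdist_adj_le:
  assumes "x \<in> V" "z \<in> V" "r \<in> V" "E x z"
  shows "d z r \<le> d x r + 1"
  using gdist_triangle[OF assms(2,1,3)] gdist_eq_1_iff[OF assms(2,1)] E_sym assms by simp

lemma exists_adj_gdist_Suc: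
  assumes "x \<in> V" "r \<in> V" "x \<noteq> r"
  obtains z where "z \<in> V" "E x z" "Suc (d z r) = d x r"
proof -
  obtain p where p: "walk V E p" "hd p = x" "last p = r" "length p = Suc (d x r)"
    using shortest_walk_exists[OF assms(1,2)] .
  with assms(3) obtain z q where pq: "p = x # z # q" by (cases p; cases "tl p") auto
  with p have w: "walk V E (z # q)" and e: "E x z" and z: "z \<in> V"
    using walk_set[of V E "z # q"] by auto
  have "last (z # q) = r" using p(3) pq by simp
  from gdist_le_walk[OF w _ this] have "Suc (d z r) \<le> d x r" using p(4) pq by simp
  moreover have "d x r \<le> Suc (d z r)" using gdist_adj_le[OF z assms(1,2)] E_sym[OF assms(1) z e] by simp
  ultimately show ?thesis using that z e by simp
qed

lemma adjacency_closed_contains: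
  assumes "x \<in> A" "\<And>a b. a \<in> A \<Longrightarrow> b \<in> V \<Longrightarrow> E a b \<Longrightarrow> b \<in> A" "x \<in> V" "y \<in> V"
  shows "y \<in> A"
proof -
  obtain p where p: "walk V E p" "hd p = x" "last p = y" using connected[OF assms(3,4)] by blast
  have "walk V E p \<Longrightarrow> hd p \<in> A \<Longrightarrow> last p \<in> A" for p
  proof (induction p rule: induct_list012)
    case (3 x y zs)
    then have "y \<in> A" using assms(2) walk_set[OF 3(3)] by auto
    with 3 show ?case by auto
  qed (simp_all add: walk_def)
  with p assms(1) show ?thesis by blast
qed

lemma shortest_walk_distinct:
  assumes p: "walk V E p" "hd p = x" "last p = y" "length p = Suc (d x y)"
  shows "distinct p"
proof (rule ccontr)
  assume "\<not> distinct p"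
  then obtain xs a ys zs where dec: "p = xs @ [a] @ ys @ [a] @ zs"
    using not_distinct_decomp by blast
  let ?q = "(xs @ [a]) @ tl (a # zs)"
  have "walk V E (xs @ [a])" using walk_take[OF p(1), of "Suc (length xs)"] dec by simp
  moreover have "walk V E (a # zs)"
    using walk_drop[OF p(1), of "length xs + Suc (length ys)"] dec by simp
  ultimately have "walk V E ?q" by (rule walk_join) simp
  moreover have "hd ?q = x" "last ?q = y" using p(2,3) dec by (cases xs; simp)+
  ultimately have "d x y \<le> length ?q - 1" by (rule gdist_le_walk)
  then show False using p(4) dec by simp
qed

lemma deg_eq_1_iff: "deg x = 1 \<longleftrightarrow> (\<exists>u\<in>V. \<forall>w\<in>V. E x w \<longleftrightarrow> w = u)"
proof
  assume "deg x = 1"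
  then obtain u where "{y\<in>V. E x y} = {u}" unfolding deg_def by (rule card_1_singletonE)
  then show "\<exists>u\<in>V. \<forall>w\<in>V. E x w \<longleftrightarrow> w = u" by blast
next
  assume "\<exists>u\<in>V. \<forall>w\<in>V. E x w \<longleftrightarrow> w = u"
  then obtain u where "{y\<in>V. E x y} = {u}" by blast
  then show "deg x = 1" unfolding deg_def by simp
qed

lemma leaf_neighbour_unique: "deg x = 1 \<Longrightarrow> E x u \<Longrightarrow> E x w \<Longrightarrow> u \<in> V \<Longrightarrow> w \<in> V \<Longrightarrow> w = u"
  unfolding deg_eq_1_iff by fastforce

lemma gdist_leaf:
  assumes "deg a = 1" "E a u" "a \<in> V" "u \<in> V" "v \<in> V" "v \<noteq> a"
  shows "d v a = Suc (d v u)"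
proof -
  obtain z where z: "z \<in> V" "E a z" "Suc (d z v) = d a v"
    using exists_adj_gdist_Suc[OF assms(3,5)] assms(6) by metis
  then have "z = u" using leaf_neighbour_unique[OF assms(1,2)] assms(4) by blast
  with z show ?thesis using gdist_commute assms(3-5) by simp
qed

lemma V_eq_insert_leaf_neighbours:
  assumes u: "u \<in> V" and leaves: "\<And>y. y \<in> V \<Longrightarrow> E u y \<Longrightarrow> deg y = 1"
  shows "V = insert u {y\<in>V. E u y}"
proof -
  have "y \<in> insert u {y\<in>V. E u y}" if "y \<in> V" for y
  proof (rule adjacency_closed_contains[OF _ _ u that])
    fix a b assume "a \<in> insert u {y\<in>V. E u y}" "b \<in> V" "E a b"
    then show "b \<in> insert u {y\<in>V. E u y}"
      using leaves leaf_neighbour_unique E_sym u by blast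
  qed simp
  then show ?thesis using u by blast
qed

lemma star_shape_of_leaf_neighbours:
  assumes u: "u \<in> V" and leaves: "\<And>y. y \<in> V \<Longrightarrow> E u y \<Longrightarrow> deg y = 1"
  shows "\<forall>x\<in>V. \<forall>y\<in>V. E x y \<longleftrightarrow> (x = u \<longleftrightarrow> y \<noteq> u)"
proof -
  have adj: "E u y" if "y \<in> V" "y \<noteq> u" for y
    using V_eq_insert_leaf_neighbours[OF assms] that by blast
  have "\<not> E x y" if "x \<in> V" "y \<in> V" "x \<noteq> u" "y \<noteq> u" for x y
    using leaf_neighbour_unique[OF leaves[OF _ adj] E_sym[OF u _ adj]] adj u that by metis
  then show ?thesis using adj E_sym E_irrefl u by blast
qed

lemma deg_ge_card:
  assumes "A \<subseteq> V" "\<forall>a\<in>A. E u a"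
  shows "card A \<le> deg u"
  unfolding deg_def using assms finite_V by (intro card_mono) auto

lemma automorphism_gdist:
  "automorphism V E f \<Longrightarrow> x \<in> V \<Longrightarrow> y \<in> V \<Longrightarrow> d (f x) (f y) = d x y"
  using gdist_graph_isomorphism by (simp add: automorphism_iff_graph_isomorphism)

lemma automorphism_deg:
  assumes f: "automorphism V E f" and x: "x \<in> V"
  shows "deg (f x) = deg x"
proof -
  have b: "bij_betw f V V" and e: "\<And>y. y \<in> V \<Longrightarrow> E (f x) (f y) \<longleftrightarrow> E x y"
    using f x by (auto simp: automorphism_def)
  have "{y\<in>V. E (f x) y} = f ` {y\<in>V. E x y}"
  proof (intro equalityI subsetI)
    fix z assume "z \<in> {y\<in>V. E (f x) y}"
    moreover obtain y where "y \<in> V" "z = f y"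
      using calculation bij_betw_imp_surj_on[OF b] by auto
    ultimately show "z \<in> f ` {y\<in>V. E x y}" using e by auto
  qed (use e bij_betwE[OF b] in auto)
  moreover have "inj_on f {y\<in>V. E x y}"
    using bij_betw_imp_inj_on[OF b] by (rule inj_on_subset) auto
  ultimately show ?thesis unfolding deg_def by (simp add: card_image)
qed

lemma automorphism_fixing_resolving_is_id:
  assumes S: "resolving V E S" and f: "automorphism V E f" and fixed: "\<forall>s\<in>S. f s = s"
    and x: "x \<in> V"
  shows "f x = x"
proof (rule ccontr)
  assume "f x \<noteq> x"
  moreover have "f x \<in> V" using automorphism_in[OF f x] .
  ultimately obtain s where s: "s \<in> S" "d (f x) s \<noteq> d x s"
    using S x unfolding resolving_def by blast
  then have "s \<in> V" using S unfolding resolving_def by auto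
  then show False using automorphism_gdist[OF f x \<open>s \<in> V\<close>] s fixed by simp
qed

lemma resolving_V: "resolving V E V"
  unfolding resolving_def by (metis gdist_eq_0_iff gdist_self order_refl)

lemma metric_basis_exists:
  obtains S where "resolving V E S" "card S = metric_dim V E"
proof -
  have "\<exists>k S. resolving V E S \<and> card S = k" using resolving_V by blast
  from LeastI_ex[OF this] show ?thesis using that unfolding metric_dim_def by blast
qed

lemma resolving_finite: "resolving V E S \<Longrightarrow> finite S"
  using finite_V finite_subset unfolding resolving_def by blast

lemma resolving_nonempty:
  assumes "resolving V E S" "card V \<ge> 2"
  shows "S \<noteq> {}"
proof -
  have "\<not> card V \<le> 1" using assms(2) by simp
  then obtain x y where "x \<in> V" "y \<in> V" "x \<noteq> y"
    using card_le_Suc0_iff_eq[OF finite_V] by auto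
  then show ?thesis using assms(1) unfolding resolving_def by blast
qed

lemma metric_dim_eq_1:
  assumes "card V \<ge> 2" "resolving V E {s}"
  shows "metric_dim V E = 1"
  unfolding metric_dim_def
proof (rule Least_equality)
  show "\<exists>S. resolving V E S \<and> card S = 1" using assms(2) by force
  fix k assume "\<exists>S. resolving V E S \<and> card S = k"
  then obtain S where S: "resolving V E S" "card S = k" by blast
  have "S \<noteq> {}" "finite S"
    using resolving_nonempty[OF S(1) assms(1)] resolving_finite[OF S(1)] .
  then show "1 \<le> k" using S(2) card_gt_0_iff by (metis One_nat_def Suc_leI)
qed

lemma graph_iso_path_of_resolving_singleton:
  assumes S: "resolving V E {s}"
  shows "graph_iso V E (path_V (card V)) path_E"
proof -
  have sV: "s \<in> V" using S unfolding resolving_def by auto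
  define g where "g v = d v s" for v
  have inj: "inj_on g V"
    using S unfolding resolving_def g_def inj_on_def by blast
  have closer: "\<exists>z\<in>V. E v z \<and> Suc (g z) = g v" if "v \<in> V" "g v \<noteq> 0" for v
    using exists_adj_gdist_Suc[OF that(1) sV] that sV unfolding g_def by (metis gdist_self)
  have down: "\<forall>v\<in>V. g v = n \<longrightarrow> {..n} \<subseteq> g ` V" for n
  proof (induction n)
    case 0
    then show ?case by auto
  next
    case (Suc n)
    show ?case
    proof (intro ballI impI)
      fix v assume v: "v \<in> V" "g v = Suc n"
      with closer obtain z where "z \<in> V" "g z = n" by fastforce
      with Suc.IH have "{..n} \<subseteq> g ` V" by blast
      moreover have "Suc n \<in> g ` V" using v by force
      ultimately show "{..Suc n} \<subseteq> g ` V" by (simp add: atMost_Suc)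
    qed
  qed
  have "g ` V = {..<card V}"
  proof (rule card_subset_eq)
    show "g ` V \<subseteq> {..<card V}"
    proof
      fix a assume "a \<in> g ` V"
      then have "{..a} \<subseteq> g ` V" using down by blast
      then have "card {..a} \<le> card V" using card_mono[OF finite_imageI[OF finite_V]] card_image[OF inj]
        by fastforce
      then show "a \<in> {..<card V}" by simp
    qed
  qed (simp_all add: card_image[OF inj])
  moreover have "E x y \<longleftrightarrow> path_E (g x) (g y)" if x: "x \<in> V" and y: "y \<in> V" for x y
  proof
    assume e: "E x y"
    then have "g x \<noteq> g y" using inj_onD[OF inj _ x y] E_irrefl by blast
    moreover have "g y \<le> g x + 1" "g x \<le> g y + 1"
      using gdist_adj_le[OF x y sV e] gdist_adj_le[OF y x sV E_sym[OF x y e]] unfolding g_def by auto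
    ultimately show "path_E (g x) (g y)" unfolding path_E_def by auto
  next
    have parent: "E a b" if ab: "a \<in> V" "b \<in> V" "g a = Suc (g b)" for a b
    proof -
      obtain z where "z \<in> V" "E a z" "Suc (g z) = g a" using closer ab by fastforce
      with ab inj_onD[OF inj] show ?thesis by force
    qed
    assume "path_E (g x) (g y)"
    then show "E x y" using parent[OF x y] parent[OF y x] E_sym x y unfolding path_E_def by blast
  qed
  ultimately show ?thesis
    unfolding graph_iso_def path_V_def bij_betw_def using inj by (intro exI[of _ g]) auto
qed

subsection \<open>Distinguishing colourings built from a resolving set\<close>

text \<open>One colour fewer than the obvious |S| + 1: only S - {s0, s1} is coloured injectively,
  K gets one further colour and all remaining vertices share the last one.\<close>

lemma distinguishing_number_le_card_resolving:
  assumes S: "resolving V E S" and s: "s0 \<in> S" "s1 \<in> S" "s0 \<noteq> s1"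
    and K: "K \<subseteq> V" "s1 \<in> K" "K \<inter> S \<subseteq> {s0, s1}"
    and fixes_pair: "\<And>f. automorphism V E f \<Longrightarrow> f ` K \<subseteq> K \<Longrightarrow> (\<forall>v\<in>S - {s0, s1}. f v = v)
      \<Longrightarrow> f s0 = s0 \<and> f s1 = s1"
  shows "distinguishing_number V E \<le> card S"
proof -
  let ?R = "S - {s0, s1}"
  have fin: "finite S" using resolving_finite[OF S] .
  have "card {s0, s1} \<le> card S" using fin s by (intro card_mono) auto
  then have cardR: "card ?R + 2 = card S" using fin s by (simp add: card_Diff_subset)
  obtain idx where idx: "bij_betw idx ?R {0..<card ?R}"
    using ex_bij_betw_finite_nat[of ?R] fin by auto
  define c where "c v = (if v \<in> ?R then idx v + 2 else if v \<in> K then 1 else 0)" for v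
  have "distinguishing_coloring V E (card S) c"
    unfolding distinguishing_coloring_def
  proof (intro conjI allI impI)
    show "c ` V \<subseteq> {..<card S}"
    proof
      fix w assume "w \<in> c ` V"
      moreover have "idx v + 2 < card S" if "v \<in> ?R" for v
        using bspec[OF bij_betwE[OF idx] that] cardR by simp
      ultimately show "w \<in> {..<card S}" using cardR unfolding c_def by auto
    qed
    fix f assume f: "automorphism V E f \<and> (\<forall>x\<in>V. c (f x) = c x)"
    have SV: "S \<subseteq> V" using S by (simp add: resolving_def)
    have R: "\<forall>v\<in>?R. f v = v"
    proof
      fix v assume v: "v \<in> ?R"
      then have "c (f v) = c v" using f SV by blast
      also have "\<dots> = idx v + 2" using v by (simp add: c_def)
      finally have "f v \<in> ?R" "idx (f v) = idx v" unfolding c_def by (auto split: if_splits)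
      then show "f v = v" using v bij_betw_imp_inj_on[OF idx] by (auto dest: inj_onD)
    qed
    have "f ` K \<subseteq> K"
    proof
      fix w assume "w \<in> f ` K"
      then obtain v where v: "v \<in> K" "w = f v" by blast
      then have "v \<notin> ?R" using K(3) by auto
      have "c w = c v" using f v K(1) by blast
      also have "\<dots> = 1" using \<open>v \<notin> ?R\<close> v by (simp add: c_def)
      finally have "c w = 1" .
      then show "w \<in> K" unfolding c_def by (auto split: if_splits)
    qed
    with f R fixes_pair have "\<forall>v\<in>S. f v = v" by blast
    then show "\<forall>x\<in>V. f x = x" using automorphism_fixing_resolving_is_id[OF S] f by blast
  qed
  then show ?thesis by (rule distinguishing_number_le)
qed

lemma distinguishing_number_le_of_stable_basis_vertex:
  assumes S: "resolving V E S" and s: "s0 \<in> S" "s1 \<in> S" "s0 \<noteq> s1"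
    and stable: "\<And>f. automorphism V E f \<Longrightarrow> f s0 \<in> S"
  shows "distinguishing_number V E \<le> card S"
proof (rule distinguishing_number_le_card_resolving[OF S s, of "{s1}"])
  have SV: "S \<subseteq> V" using S unfolding resolving_def by blast
  fix f assume f: "automorphism V E f" "f ` {s1} \<subseteq> {s1}" "\<forall>v\<in>S - {s0, s1}. f v = v"
  then have "f s1 = s1" by simp
  have "f s0 \<notin> S - {s0, s1}"
  proof
    assume *: "f s0 \<in> S - {s0, s1}"
    then have "f (f s0) = f s0" using f(3) by blast
    then have "f s0 = s0" using automorphism_eq_iff[OF f(1)] * s SV by blast
    with * show False by blast
  qed
  moreover have "f s0 \<noteq> s1"
    using \<open>f s1 = s1\<close> automorphism_eq_iff[OF f(1), of s0 s1] s SV by auto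
  ultimately have "f s0 = s0" using stable[OF f(1)] by blast
  with \<open>f s1 = s1\<close> show "f s0 = s0 \<and> f s1 = s1" by simp
qed (use S s in \<open>auto simp: resolving_def\<close>)

lemma distinguishing_number_le_of_basis_degrees:
  assumes S: "resolving V E S" and s: "s0 \<in> S" "s1 \<in> S" and "deg s0 \<noteq> deg s1"
  shows "distinguishing_number V E \<le> card S"
proof (rule distinguishing_number_le_card_resolving[OF S s _, of "{s0, s1}"])
  have SV: "S \<subseteq> V" using S unfolding resolving_def by blast
  show "s0 \<noteq> s1" using assms(4) by blast
  fix f assume f: "automorphism V E f" "f ` {s0, s1} \<subseteq> {s0, s1}"
  have "f s1 = s1" using f(2) automorphism_deg[OF f(1)] s SV assms(4) by force
  moreover have "f s0 \<noteq> f s1" using automorphism_eq_iff[OF f(1)] s SV \<open>s0 \<noteq> s1\<close> by auto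
  ultimately show "f s0 = s0 \<and> f s1 = s1" using f(2) by auto
qed (use S s in \<open>auto simp: resolving_def\<close>)

lemma distinguishing_number_le_of_separating_vertex:
  assumes S: "resolving V E S" and s: "s0 \<in> S" "s1 \<in> S" "s0 \<noteq> s1"
    and u: "u \<in> V" "u \<notin> S" "deg u \<noteq> deg s0" "deg u \<noteq> deg s1" "d u s0 \<noteq> d u s1"
  shows "distinguishing_number V E \<le> card S"
proof (rule distinguishing_number_le_card_resolving[OF S s, of "{s0, s1, u}"])
  have SV: "S \<subseteq> V" using S unfolding resolving_def by blast
  fix f assume f: "automorphism V E f" "f ` {s0, s1, u} \<subseteq> {s0, s1, u}"
  have V: "s0 \<in> V" "s1 \<in> V" using s SV by auto
  have "f u = u" using f(2) automorphism_deg[OF f(1) u(1)] u(3,4) by auto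
  moreover have "d u (f s1) = d u s1" using automorphism_gdist[OF f(1) u(1) V(2)] \<open>f u = u\<close> by simp
  moreover have "f s1 \<noteq> f u" using automorphism_eq_iff[OF f(1) V(2) u(1)] s(2) u(2) by auto
  ultimately have "f s1 = s1" using f(2) u(5) by auto
  moreover have "f s0 \<noteq> f s1" "f s0 \<noteq> f u"
    using automorphism_eq_iff[OF f(1) V(1)] V(2) u(1,2) s by auto
  ultimately show "f s0 = s0 \<and> f s1 = s1" using f(2) \<open>f u = u\<close> by auto
qed (use S s u in \<open>auto simp: resolving_def\<close>)

subsection \<open>Resolving sets of leaves at a common vertex\<close>

lemma eq_of_gdist_hub:
  assumes S: "resolving V E S" and u: "u \<in> V" and hub: "\<forall>a\<in>S. deg a = 1 \<and> E a u"
    and vw: "v \<in> V" "w \<in> V" "v \<notin> S" "w \<notin> S" and eq: "d v u = d w u"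
  shows "v = w"
proof (rule ccontr)
  assume "v \<noteq> w"
  then obtain a where a: "a \<in> S" "d v a \<noteq> d w a" using S vw unfolding resolving_def by blast
  have "a \<in> V" "v \<noteq> a" "w \<noteq> a" using S a(1) vw unfolding resolving_def by auto
  then have "d v a = d w a" using gdist_leaf[of a u] hub a(1) vw(1,2) u eq by simp
  with a(2) show False by simp
qed

lemma deg_le_2_off_hub:
  assumes S: "resolving V E S" and u: "u \<in> V" and hub: "\<forall>a\<in>S. deg a = 1 \<and> E a u"
    and v: "v \<in> V" "v \<notin> S" "v \<noteq> u"
  shows "deg v \<le> 2"
proof -
  let ?N = "{z\<in>V. E v z}"
  have SV: "S \<subseteq> V" using S unfolding resolving_def by blast
  have NS: "z \<notin> S" if z: "z \<in> ?N" for z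
  proof
    assume "z \<in> S"
    then have "deg z = 1" "E z u" "E z v" using hub z E_sym[OF v(1)] by auto
    then show False using leaf_neighbour_unique u v z by blast
  qed
  have inj: "inj_on (\<lambda>z. d z u) ?N"
    using eq_of_gdist_hub[OF S u hub] NS by (intro inj_onI) auto
  have img: "(\<lambda>z. d z u) ` ?N \<subseteq> {d v u - 1, d v u + 1}"
  proof
    fix b assume "b \<in> (\<lambda>z. d z u) ` ?N"
    then obtain z where z: "z \<in> ?N" "b = d z u" by blast
    then have zV: "z \<in> V" "E v z" "z \<notin> S" using NS by auto
    then have "z \<noteq> v" using E_irrefl by blast
    then have "d z u \<noteq> d v u" using eq_of_gdist_hub[OF S u hub zV(1) v(1) zV(3) v(2)] by blast
    moreover have "d z u \<le> d v u + 1" "d v u \<le> d z u + 1"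
      using gdist_adj_le[OF v(1) zV(1) u zV(2)] gdist_adj_le[OF zV(1) v(1) u E_sym[OF v(1) zV(1,2)]]
      by auto
    ultimately show "b \<in> {d v u - 1, d v u + 1}" using z(2) by auto
  qed
  have "card ?N = card ((\<lambda>z. d z u) ` ?N)" using card_image[OF inj] by simp
  also have "\<dots> \<le> card {d v u - 1, d v u + 1}" using img by (intro card_mono) auto
  also have "\<dots> \<le> 2" by (simp add: card_insert_if)
  finally show ?thesis unfolding deg_def .
qed

lemma automorphism_fixes_hub:
  assumes S: "resolving V E S" "card S \<ge> 2" and u: "u \<in> V" and hub: "\<forall>a\<in>S. deg a = 1 \<and> E a u"
    and f: "automorphism V E f"
  shows "f u = u"
proof (rule ccontr)
  assume fu: "f u \<noteq> u"
  have SV: "S \<subseteq> V" using S unfolding resolving_def by blast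
  have degu: "card S \<le> deg u" using deg_ge_card[OF SV] hub E_sym u SV by blast
  have fuV: "f u \<in> V" using automorphism_in[OF f u] .
  have "f u \<notin> S" using automorphism_deg[OF f u] degu S(2) hub by auto
  then have "deg u \<le> 2" using deg_le_2_off_hub[OF S(1) u hub fuV _ fu] automorphism_deg[OF f u] by simp
  moreover have "S \<subseteq> {y\<in>V. E u y}" using hub E_sym u SV by blast
  ultimately have "S = {y\<in>V. E u y}"
    using card_seteq[of "{y\<in>V. E u y}" S] finite_V S(2) unfolding deg_def by simp
  then have "V = insert u S" using V_eq_insert_leaf_neighbours[OF u] hub by auto
  then show False using fuV fu \<open>f u \<notin> S\<close> by blast
qed

text \<open>If an automorphism moves a basis leaf s0 off S, the hub u is the neighbour of s0 and
  f s0 is a further leaf at u; distances to u separate the vertices outside S, so these are all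
  the neighbours of u.\<close>

lemma star_shape_of_leaf_basis:
  assumes S: "resolving V E S" "card S \<ge> 2" and leaves: "\<forall>a\<in>S. deg a = 1"
    and equidistant: "\<And>v a b. v \<in> V \<Longrightarrow> v \<notin> S \<Longrightarrow> deg v \<noteq> 1 \<Longrightarrow> a \<in> S \<Longrightarrow> b \<in> S \<Longrightarrow> d v a = d v b"
    and f: "automorphism V E f" and s0: "s0 \<in> S" "f s0 \<notin> S"
  obtains u where "u \<in> V" "\<forall>x\<in>V. \<forall>y\<in>V. E x y \<longleftrightarrow> (x = u \<longleftrightarrow> y \<noteq> u)"
proof -
  have SV: "S \<subseteq> V" using S unfolding resolving_def by blast
  with s0 have s0V: "s0 \<in> V" by blast
  have "deg s0 = 1" using leaves s0 by blast
  then obtain u where u: "u \<in> V" "E s0 u" unfolding deg_eq_1_iff by blast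
  define t where "t = f s0"
  have "t \<in> V" using automorphism_in[OF f s0V] by (simp add: t_def)
  moreover have "deg t = 1" using automorphism_deg[OF f s0V] \<open>deg s0 = 1\<close> by (simp add: t_def)
  ultimately have t: "t \<in> V" "t \<notin> S" "deg t = 1" using s0(2) by (simp_all add: t_def)
  have "deg u \<noteq> 1"
  proof
    assume "deg u = 1"
    then have N: "{y\<in>V. E u y} = {s0}"
      using leaf_neighbour_unique[OF _ E_sym[OF s0V u]] E_sym[OF s0V u] u s0V by blast
    have "V = insert u {y\<in>V. E u y}"
    proof (rule V_eq_insert_leaf_neighbours[OF u(1)])
      fix y assume "y \<in> V" "E u y"
      then show "deg y = 1" using N leaves s0 by auto
    qed
    with N have "V = {u, s0}" by simp
    then have "S \<subseteq> {s0}" using t SV s0 by auto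
    then show False using S(2) card_mono[of "{s0}" S] by simp
  qed
  then have "u \<notin> S" using leaves by auto
  have hub: "\<forall>a\<in>S. deg a = 1 \<and> E a u"
  proof
    fix a assume a: "a \<in> S"
    then have "d u a = 1"
      using equidistant[OF u(1) \<open>u \<notin> S\<close> \<open>deg u \<noteq> 1\<close> a s0(1)] gdist_eq_1_iff u s0V E_sym by simp
    then show "deg a = 1 \<and> E a u" using gdist_eq_1_iff E_sym a leaves SV u(1) by blast
  qed
  have "f u = u" using automorphism_fixes_hub[OF S u(1) hub f] .
  moreover have "E (f s0) (f u)" using f s0V u by (simp add: automorphism_def)
  ultimately have "E t u" by (simp add: t_def)
  have "deg y = 1" if y: "y \<in> V" "E u y" for y
  proof (cases "y \<in> S")
    case False
    have "d y u = 1" "d t u = 1"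
      using gdist_eq_1_iff E_sym \<open>E t u\<close> y u(1) t(1) by auto
    then have "y = t" using eq_of_gdist_hub[OF S(1) u(1) hub y(1) t(1) False t(2)] by simp
    then show ?thesis using t by simp
  qed (use leaves in blast)
  then show ?thesis using star_shape_of_leaf_neighbours[OF u(1)] u(1) that by blast
qed

end

section \<open>Trees\<close>

locale tree_graph = connected_simple_graph +
  assumes acyclic: "\<And>c. \<not> is_cycle V E c"
begin

lemma notin_shortest_walk:
  assumes P: "walk V E P" "hd P = z" "last P = r" "length P = Suc (d z r)"
    and "d z r \<le> d x r" "z \<noteq> x"
  shows "x \<notin> set P"
proof
  assume "x \<in> set P"
  then obtain k where k: "k < length P" "P ! k = x" by (auto simp: in_set_conv_nth)
  have "k \<noteq> 0" using k P(2) assms(6) by (metis hd_conv_nth list.size(3) not_less0)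
  moreover have "d x r \<le> length (drop k P) - 1"
    using gdist_le_walk[OF walk_drop[OF P(1) k(1)]] k P(3) by (simp add: hd_drop_conv_nth)
  ultimately show False using k P(4) assms(5) by simp
qed

text \<open>Two shortest walks towards r from distinct neighbours of x would close a cycle through x.\<close>

lemma unique_closer_neighbour:
  assumes x: "x \<in> V" and r: "r \<in> V" and z: "z1 \<in> V" "z2 \<in> V" and e: "E x z1" "E x z2"
    and le: "d z1 r \<le> d x r" "d z2 r \<le> d x r"
  shows "z1 = z2"
proof (rule ccontr)
  assume ne: "z1 \<noteq> z2"
  obtain P1 where P1: "walk V E P1" "hd P1 = z1" "last P1 = r" "length P1 = Suc (d z1 r)"
    using shortest_walk_exists[OF z(1) r] .
  obtain P2 where P2: "walk V E P2" "hd P2 = z2" "last P2 = r" "length P2 = Suc (d z2 r)"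
    using shortest_walk_exists[OF z(2) r] .
  have "P1 \<noteq> []" "P2 \<noteq> []" using P1(4) P2(4) by auto
  then have "r \<in> set P1 \<inter> set P2" using P1(3) P2(3) by (metis IntI last_in_set)
  then obtain as b cs us vs where
    dec: "P1 = as @ b # cs" "P2 = us @ b # vs" and disj: "set (as @ [b]) \<inter> set us = {}"
    using first_common_element[OF _ shortest_walk_distinct[OF P2]] by blast
  have xP: "x \<notin> set P1" "x \<notin> set P2"
    using notin_shortest_walk[OF P1 le(1)] notin_shortest_walk[OF P2 le(2)] e E_irrefl by auto
  define c where "c = (x # as @ [b]) @ tl (b # rev us)"
  have "walk V E (x # P1)" using P1(1,2) e(1) x walk_not_Nil[OF P1(1)] by (cases P1) auto
  from walk_take[OF this, of "Suc (Suc (length as))"]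
  have "walk V E (x # as @ [b])" using dec by simp
  moreover have "walk V E (b # rev us)"
    using walk_rev[OF E_sym walk_take[OF P2(1), of "Suc (length us)"]] dec by simp
  ultimately have "walk V E c" unfolding c_def by (rule walk_join) simp
  moreover have "last c = z2" using P2(2) dec by (cases us) (auto simp: c_def)
  moreover have "as \<noteq> [] \<or> us \<noteq> []" using dec P1(2) P2(2) ne by auto
  then have "length c \<ge> 3" by (auto simp: c_def Suc_le_eq)
  moreover have "distinct (as @ [b])" "distinct us" "x \<notin> set (as @ [b])" "x \<notin> set us"
    using shortest_walk_distinct[OF P1] shortest_walk_distinct[OF P2] xP dec by auto
  then have "distinct c" using disj by (simp add: c_def)
  ultimately have "is_cycle V E c" using E_sym[OF x z(2) e(2)] by (simp add: is_cycle_def c_def)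
  then show False using acyclic by blast
qed

text \<open>Among the vertices v with d v s' = d v s + d s s', i.e. those seen from s' behind s,
  one farthest from s' is a leaf.\<close>

lemma exists_leaf_separating:
  assumes s: "s \<in> V" "s' \<in> V" "s \<noteq> s'" and "deg s \<noteq> 1"
  obtains x where "x \<in> V" "deg x = 1" "d x s \<noteq> d x s'"
proof -
  define m where "m = d s s'"
  obtain b where b: "b \<in> V" "E s b" "Suc (d b s') = d s s'"
    using exists_adj_gdist_Suc[OF s] .
  have "\<not> {y\<in>V. E s y} \<subseteq> {b}"
  proof
    assume "{y\<in>V. E s y} \<subseteq> {b}"
    then have "{y\<in>V. E s y} = {b}" using b by blast
    then show False using \<open>deg s \<noteq> 1\<close> by (simp add: deg_def)
  qed
  then obtain y where y: "y \<in> V" "E s y" "y \<noteq> b" by blast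
  then have "\<not> d y s' \<le> d s s'"
    using unique_closer_neighbour[OF s(1,2) b(1) y(1) b(2) y(2)] b(3) by (metis Suc_leD order_refl)
  then have "d y s' = d y s + m"
    using gdist_adj_le[OF s(1) y(1) s(2) y(2)] gdist_eq_1_iff[OF y(1) s(1)] E_sym[OF s(1) y(1,2)]
    unfolding m_def by simp
  define Y where "Y = {v\<in>V. d v s' = d v s + m}"
  have "y \<in> Y" "finite Y" using y \<open>d y s' = d y s + m\<close> finite_V by (auto simp: Y_def)
  then have "Max ((\<lambda>v. d v s') ` Y) \<in> (\<lambda>v. d v s') ` Y" by (intro Max_in) auto
  then obtain x where xY: "x \<in> Y" and "d x s' = Max ((\<lambda>v. d v s') ` Y)" by auto
  with \<open>finite Y\<close> have xmax: "\<And>v. v \<in> Y \<Longrightarrow> d v s' \<le> d x s'" by simp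
  have x: "x \<in> V" "d x s' = d x s + m" using xY by (auto simp: Y_def)
  have "m \<noteq> 0" using gdist_eq_0_iff s unfolding m_def by simp
  then have "x \<noteq> s'" using x s(2) by auto
  then obtain p where p: "p \<in> V" "E x p" "Suc (d p s') = d x s'"
    using exists_adj_gdist_Suc[OF x(1) s(2)] by blast
  have "z = p" if z: "z \<in> V" "E x z" for z
  proof (rule ccontr)
    assume "z \<noteq> p"
    then have far: "\<not> d z s' \<le> d x s'"
      using unique_closer_neighbour[OF x(1) s(2) p(1) z(1) p(2) z(2)] p(3) by (metis Suc_leD order_refl)
    have "d z s \<le> d x s + 1" "d z s' \<le> d z s + m"
      using gdist_adj_le[OF x(1) z(1) s(1) z(2)] gdist_triangle[OF z(1) s(1,2)] unfolding m_def by auto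
    then have "z \<in> Y"
      using far gdist_adj_le[OF x(1) z(1) s(2) z(2)] x z(1) unfolding Y_def by simp
    then show False using xmax far by blast
  qed
  then have "deg x = 1" using p(1,2) deg_eq_1_iff by blast
  with x \<open>m \<noteq> 0\<close> that show ?thesis by simp
qed

lemma distinguishing_number_le_or_star_of_regular_basis:
  assumes S: "resolving V E S" "card S \<ge> 2" and s: "s0 \<in> S" "s1 \<in> S" "s0 \<noteq> s1"
    and regular: "\<forall>a\<in>S. deg a = deg s0"
    and equidistant: "\<And>v a b. v \<in> V \<Longrightarrow> v \<notin> S \<Longrightarrow> deg v \<noteq> deg s0 \<Longrightarrow> a \<in> S \<Longrightarrow> b \<in> S \<Longrightarrow> d v a = d v b"
  shows "distinguishing_number V E \<le> card S \<or> (card V \<ge> 3 \<and> graph_iso V E (star_V (card V - 1)) star_E)"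
proof -
  have SV: "S \<subseteq> V" using S(1) unfolding resolving_def by blast
  have "deg s0 = 1"
  proof (rule ccontr)
    assume "deg s0 \<noteq> 1"
    then obtain x where x: "x \<in> V" "deg x = 1" "d x s0 \<noteq> d x s1"
      using exists_leaf_separating s SV by blast
    then have "x \<notin> S" using regular \<open>deg s0 \<noteq> 1\<close> by auto
    then show False using equidistant[OF x(1) _ _ s(1,2)] x \<open>deg s0 \<noteq> 1\<close> by simp
  qed
  show ?thesis
  proof (cases "\<exists>f. automorphism V E f \<and> f s0 \<notin> S")
    case True
    then obtain f where f: "automorphism V E f" "f s0 \<notin> S" by blast
    have leaves: "\<forall>a\<in>S. deg a = 1" using regular \<open>deg s0 = 1\<close> by simp
    have "d v a = d v b" if "v \<in> V" "v \<notin> S" "deg v \<noteq> 1" "a \<in> S" "b \<in> S" for v a b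
      using equidistant[OF that(1,2) _ that(4,5)] that(3) \<open>deg s0 = 1\<close> by simp
    then obtain u where "u \<in> V" "\<forall>x\<in>V. \<forall>y\<in>V. E x y \<longleftrightarrow> (x = u \<longleftrightarrow> y \<noteq> u)"
      using star_shape_of_leaf_basis[OF S leaves _ f(1) s(1) f(2)] by blast
    then have "graph_iso V E (star_V (card V - 1)) star_E" by (rule graph_iso_star[OF finite_V])
    moreover have "card (insert (f s0) S) \<le> card V"
      using SV automorphism_in[OF f(1)] s(1) finite_V by (intro card_mono) auto
    then have "card V \<ge> 3" using S(2) f(2) resolving_finite[OF S(1)] by simp
    ultimately show ?thesis by blast
  next
    case False
    then show ?thesis using distinguishing_number_le_of_stable_basis_vertex[OF S(1) s] by auto
  qed
qed

lemma distinguishing_number_le_metric_dim: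
  assumes V: "card V \<ge> 2"
    and not_path: "\<And>n. \<not> graph_iso V E (path_V n) path_E"
    and not_star: "\<And>n. n \<ge> 2 \<Longrightarrow> \<not> graph_iso V E (star_V n) star_E"
  shows "distinguishing_number V E \<le> metric_dim V E"
proof -
  obtain S where S: "resolving V E S" "card S = metric_dim V E" by (rule metric_basis_exists)
  have "card S \<noteq> 1"
  proof
    assume "card S = 1"
    then obtain s where "S = {s}" by (rule card_1_singletonE)
    then show False using graph_iso_path_of_resolving_singleton S(1) not_path by blast
  qed
  moreover have "card S \<noteq> 0" using resolving_nonempty[OF S(1) V] resolving_finite[OF S(1)] by simp
  ultimately have S2: "card S \<ge> 2" by linarith
  then have "\<not> card S \<le> Suc 0" by simp
  then obtain s0 s1 where s: "s0 \<in> S" "s1 \<in> S" "s0 \<noteq> s1"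
    using card_le_Suc0_iff_eq[OF resolving_finite[OF S(1)]] by blast
  show ?thesis
  proof (cases "\<exists>a\<in>S. deg a \<noteq> deg s0")
    case True
    then show ?thesis using distinguishing_number_le_of_basis_degrees[OF S(1) _ s(1)] S(2) by auto
  next
    case False
    then have regular: "\<forall>a\<in>S. deg a = deg s0" by blast
    show ?thesis
    proof (cases "\<exists>v\<in>V. v \<notin> S \<and> deg v \<noteq> deg s0 \<and> (\<exists>a\<in>S. \<exists>b\<in>S. d v a \<noteq> d v b)")
      case True
      then obtain v a b where "v \<in> V" "v \<notin> S" "deg v \<noteq> deg s0" "a \<in> S" "b \<in> S" "d v a \<noteq> d v b"
        by blast
      then show ?thesis
        using distinguishing_number_le_of_separating_vertex[OF S(1), of a b v] regular S(2) by auto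
    next
      case False
      then have "d v a = d v b" if "v \<in> V" "v \<notin> S" "deg v \<noteq> deg s0" "a \<in> S" "b \<in> S" for v a b
        using that by blast
      then show ?thesis
        using distinguishing_number_le_or_star_of_regular_basis[OF S(1) S2 s regular] not_star S(2)
        by fastforce
    qed
  qed
qed

end

lemma tree_graph_if_is_tree: "is_tree V E \<Longrightarrow> tree_graph V E"
  unfolding is_tree_def simple_graph_def connected_graph_def
  by unfold_locales blast+

section \<open>Paths and stars\<close>

lemma walk_path_upt: "i < n \<Longrightarrow> walk (path_V n) path_E [0..<Suc i]"
proof (induction i)
  case (Suc i)
  then have "walk (path_V n) path_E [0..<Suc i]" by simp
  from walk_append[OF this, of "[Suc i]"]
  have "walk (path_V n) path_E ([0..<Suc i] @ [Suc i])"
    using Suc.prems by (simp add: path_V_def path_E_def)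
  then show ?case by simp
qed (simp add: path_V_def)

lemma path_connected_simple_graph: "connected_simple_graph (path_V n) path_E"
proof
  show sym: "\<And>x y. path_E x y \<Longrightarrow> path_E y x" by (auto simp: path_E_def)
  have root: "\<exists>p. walk (path_V n) path_E p \<and> hd p = 0 \<and> last p = z" if "z \<in> path_V n" for z
    using walk_path_upt[of z n] that
    by (intro exI[of _ "[0..<Suc z]"]) (simp add: path_V_def hd_upt last_upt del: upt_Suc)
  show "\<exists>p. walk (path_V n) path_E p \<and> hd p = x \<and> last p = y"
    if "x \<in> path_V n" "y \<in> path_V n" for x y
    by (rule connected_if_root[of "path_V n" path_E 0]) (use root that in \<open>auto simp: path_E_def\<close>)
qed (auto simp: path_V_def path_E_def)

interpretation path: connected_simple_graph "path_V n" path_E for n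
  by (rule path_connected_simple_graph)

lemma hd_le_walk_path: "walk (path_V n) path_E p \<Longrightarrow> hd p \<le> last p + (length p - 1)"
proof (induction p rule: induct_list012)
  case (3 x y zs)
  then show ?case by (auto simp: path_E_def)
qed (simp_all add: walk_def)

lemma gdist_path_0:
  assumes "i < n"
  shows "gdist (path_V n) path_E i 0 = i"
proof (rule antisym)
  have "walk (path_V n) path_E (rev [0..<Suc i])"
    using walk_rev[OF _ walk_path_upt[OF assms]] by (auto simp: path_E_def)
  from path.gdist_le_walk[OF this] show "gdist (path_V n) path_E i 0 \<le> i"
    by (simp add: hd_rev last_rev)
  obtain p where "walk (path_V n) path_E p" "hd p = i" "last p = 0"
    "length p = Suc (gdist (path_V n) path_E i 0)"
    using path.shortest_walk_exists[of i n 0] assms by (auto simp: path_V_def)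
  with hd_le_walk_path show "i \<le> gdist (path_V n) path_E i 0" by fastforce
qed

lemma resolving_path_0:
  assumes "0 < n"
  shows "resolving (path_V n) path_E {0}"
  unfolding resolving_def
proof (intro conjI ballI impI)
  show "{0} \<subseteq> path_V n" using assms by (simp add: path_V_def)
  fix x y assume "x \<in> path_V n" "y \<in> path_V n" "x \<noteq> y"
  then show "\<exists>s\<in>{0}. gdist (path_V n) path_E x s \<noteq> gdist (path_V n) path_E y s"
    using gdist_path_0 by (simp add: path_V_def)
qed

lemma metric_dim_path: "n \<ge> 2 \<Longrightarrow> metric_dim (path_V n) path_E = 1"
  using path.metric_dim_eq_1[OF _ resolving_path_0] by (simp add: path_V_def)

lemma distinguishing_number_path:
  assumes "n \<ge> 2"
  shows "distinguishing_number (path_V n) path_E = 2"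
proof (rule distinguishing_number_eq_2)
  let ?r = "\<lambda>i. n - 1 - i"
  have "bij_betw ?r (path_V n) (path_V n)"
    by (rule bij_betw_byWitness[where f' = ?r]) (auto simp: path_V_def)
  moreover have "path_E x y \<longleftrightarrow> path_E (?r x) (?r y)" if "x \<in> path_V n" "y \<in> path_V n" for x y
    using that by (auto simp: path_V_def path_E_def)
  ultimately show "automorphism (path_V n) path_E ?r" by (simp add: automorphism_def)
  show "0 \<in> path_V n" "n - 1 - 0 \<noteq> 0" using assms by (auto simp: path_V_def)
  define c :: "nat \<Rightarrow> nat" where "c i = (if i = 0 then 1 else 0)" for i
  show "distinguishing_coloring (path_V n) path_E 2 c"
    unfolding distinguishing_coloring_def
  proof (intro conjI allI impI)
    fix f assume f: "automorphism (path_V n) path_E f \<and> (\<forall>x\<in>path_V n. c (f x) = c x)"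
    then have "\<forall>x\<in>path_V n. c (f x) = c x" by (rule conjunct2)
    then have "c (f 0) = c 0" using \<open>0 \<in> path_V n\<close> by (rule bspec)
    then have "f 0 = 0" by (simp add: c_def split: if_splits)
    moreover have "resolving (path_V n) path_E {0}" using assms by (simp add: resolving_path_0)
    ultimately show "\<forall>x\<in>path_V n. f x = x"
      using path.automorphism_fixing_resolving_is_id f by blast
  qed (auto simp: c_def)
qed

lemma star_connected_simple_graph: "connected_simple_graph (star_V n) star_E"
proof
  have root: "\<exists>p. walk (star_V n) star_E p \<and> hd p = 0 \<and> last p = v" if "v \<in> star_V n" for v
  proof (cases "v = 0")
    case True
    then show ?thesis by (intro exI[of _ "[0]"]) (simp add: star_V_def)
  next
    case False
    then show ?thesis using that by (intro exI[of _ "[0, v]"]) (simp add: star_V_def star_E_def)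
  qed
  show "\<exists>p. walk (star_V n) star_E p \<and> hd p = x \<and> last p = y"
    if "x \<in> star_V n" "y \<in> star_V n" for x y
    by (rule connected_if_root[of "star_V n" star_E 0]) (use root that in \<open>auto simp: star_E_def\<close>)
qed (auto simp: star_V_def star_E_def)

interpretation star: connected_simple_graph "star_V n" star_E for n
  by (rule star_connected_simple_graph)

lemma gdist_star_centre: "j \<in> {1..n} \<Longrightarrow> gdist (star_V n) star_E 0 j = 1"
  using star.gdist_eq_1_iff[of 0 n j] by (simp add: star_V_def star_E_def)

lemma gdist_star_leaves:
  assumes "i \<in> {1..n}" "j \<in> {1..n}" "i \<noteq> j"
  shows "gdist (star_V n) star_E i j = 2"
proof -
  have V: "i \<in> star_V n" "j \<in> star_V n" "0 \<in> star_V n" using assms by (auto simp: star_V_def)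
  have "gdist (star_V n) star_E i j \<le> 2"
    using star.gdist_triangle[OF V(1,3,2)] star.gdist_commute[OF V(1,3)]
      gdist_star_centre[OF assms(1)] gdist_star_centre[OF assms(2)] by simp
  moreover have "gdist (star_V n) star_E i j \<noteq> 0" "gdist (star_V n) star_E i j \<noteq> 1"
    using star.gdist_eq_0_iff[OF V(1,2)] star.gdist_eq_1_iff[OF V(1,2)] assms
    by (auto simp: star_E_def)
  ultimately show ?thesis by linarith
qed

lemma automorphism_star_transpose:
  assumes "a \<in> {1..n}" "b \<in> {1..n}"
  shows "automorphism (star_V n) star_E (transpose a b)"
proof -
  have "transpose a b v = 0 \<longleftrightarrow> v = 0" for v using assms by (auto simp: transpose_eq_iff)
  moreover have "bij_betw (transpose a b) (star_V n) (star_V n)" using assms by (simp add: star_V_def)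
  ultimately show ?thesis unfolding automorphism_def star_E_def by simp
qed

lemma two_leaves_outside:
  assumes "finite T" "card T + 2 \<le> n"
  obtains a b where "a \<in> {1..n} - T" "b \<in> {1..n} - T" "a \<noteq> b"
proof -
  have "card {1..n} - card T \<le> card ({1..n} - T)" by (rule diff_card_le_card_Diff[OF assms(1)])
  then have "\<not> card ({1..n} - T) \<le> Suc 0" using assms(2) by simp
  then show ?thesis using that card_le_Suc0_iff_eq[of "{1..n} - T"] by blast
qed

lemma metric_dim_star:
  assumes "n \<ge> 2"
  shows "metric_dim (star_V n) star_E = n - 1"
  unfolding metric_dim_def
proof (rule Least_equality)
  have "resolving (star_V n) star_E {1..<n}"
    unfolding resolving_def
  proof (intro conjI ballI impI)
    fix x y assume xy: "x \<in> star_V n" "y \<in> star_V n" "x \<noteq> y"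
    show "\<exists>s\<in>{1..<n}. gdist (star_V n) star_E x s \<noteq> gdist (star_V n) star_E y s"
    proof (cases "x \<in> {1..<n} \<or> y \<in> {1..<n}")
      case True
      then show ?thesis using star.gdist_eq_0_iff[OF xy(1,2)] star.gdist_eq_0_iff[OF xy(2,1)] xy(3)
        by (metis star.gdist_self xy(1,2))
    next
      case False
      then have "x \<in> {0, n}" "y \<in> {0, n}" using xy by (auto simp: star_V_def)
      moreover have "gdist (star_V n) star_E 0 1 = 1" "gdist (star_V n) star_E n 1 = 2"
        using gdist_star_centre[of 1 n] gdist_star_leaves[of n n 1] assms by auto
      ultimately show ?thesis using xy(3) assms by (intro bexI[of _ 1]) auto
    qed
  qed (auto simp: star_V_def)
  then show "\<exists>S. resolving (star_V n) star_E S \<and> card S = n - 1" by fastforce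
  fix k assume "\<exists>T. resolving (star_V n) star_E T \<and> card T = k"
  then obtain T where T: "resolving (star_V n) star_E T" "card T = k" by blast
  show "n - 1 \<le> k"
  proof (rule ccontr)
    assume "\<not> n - 1 \<le> k"
    then have "card T + 2 \<le> n" using T(2) by simp
    then obtain a b where ab: "a \<in> {1..n} - T" "b \<in> {1..n} - T" "a \<noteq> b"
      using two_leaves_outside[OF star.resolving_finite[OF T(1)]] by blast
    then have "\<forall>s\<in>T. transpose a b s = s" by (auto simp: transpose_def)
    with ab have "transpose a b a = a"
      by (intro star.automorphism_fixing_resolving_is_id[OF T(1) automorphism_star_transpose])
        (auto simp: star_V_def)
    with ab(3) show False by simp
  qed
qed

lemma deg_star: "connected_simple_graph.deg (star_V n) star_E v = (if v = 0 then n else 1)"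
  if "v \<in> star_V n"
proof -
  have "{y \<in> star_V n. star_E v y} = (if v = 0 then {1..n} else {0})"
    using that by (auto simp: star_V_def star_E_def)
  then show ?thesis by (simp add: star.deg_def)
qed

lemma distinguishing_number_star:
  assumes "n \<ge> 2"
  shows "distinguishing_number (star_V n) star_E = n"
  unfolding distinguishing_number_def
proof (rule Least_equality)
  \<comment> \<open>the centre shares colour 0 with leaf 1; it is singled out by its degree\<close>
  have "distinguishing_coloring (star_V n) star_E n (\<lambda>v. v - 1)"
    unfolding distinguishing_coloring_def
  proof (intro conjI allI impI)
    show "(\<lambda>v. v - 1) ` star_V n \<subseteq> {..<n}" using assms by (auto simp: star_V_def)
    fix f assume f: "automorphism (star_V n) star_E f \<and> (\<forall>x\<in>star_V n. f x - 1 = x - 1)"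
    have "0 \<in> star_V n" by (simp add: star_V_def)
    moreover have "f 0 \<in> star_V n" using automorphism_in[OF conjunct1[OF f]] \<open>0 \<in> star_V n\<close> .
    ultimately have "connected_simple_graph.deg (star_V n) star_E (f 0) = n"
      using star.automorphism_deg[of n f 0] f deg_star by simp
    then have "f 0 = 0" using deg_star[OF \<open>f 0 \<in> star_V n\<close>] assms by (simp split: if_splits)
    show "\<forall>x\<in>star_V n. f x = x"
    proof
      fix x assume x: "x \<in> star_V n"
      show "f x = x"
      proof (cases "x = 0")
        case False
        then have "f x \<noteq> 0"
          using \<open>f 0 = 0\<close> automorphism_eq_iff[OF conjunct1[OF f] x \<open>0 \<in> star_V n\<close>] by simp
        with False show ?thesis using f x by auto
      qed (simp add: \<open>f 0 = 0\<close>)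
    qed
  qed
  then show "\<exists>c. distinguishing_coloring (star_V n) star_E n c" by blast
  fix k assume "\<exists>c. distinguishing_coloring (star_V n) star_E k c"
  then obtain c where c: "distinguishing_coloring (star_V n) star_E k c" by blast
  show "n \<le> k"
  proof (rule ccontr)
    assume "\<not> n \<le> k"
    have "c ` {1..n} \<subseteq> c ` star_V n" by (auto simp: star_V_def)
    then have "c ` {1..n} \<subseteq> {..<k}" using c unfolding distinguishing_coloring_def by blast
    have "\<not> inj_on c {1..n}"
    proof
      assume "inj_on c {1..n}"
      from card_inj_on_le[OF this \<open>c ` {1..n} \<subseteq> {..<k}\<close>] show False
        using \<open>\<not> n \<le> k\<close> by simp
    qed
    then obtain a b where ab: "a \<in> {1..n}" "b \<in> {1..n}" "a \<noteq> b" "c a = c b"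
      unfolding inj_on_def by blast
    then have "\<forall>x\<in>star_V n. c (transpose a b x) = c x" by (auto simp: transpose_def)
    with c automorphism_star_transpose[OF ab(1,2)] have "\<forall>x\<in>star_V n. transpose a b x = x"
      unfolding distinguishing_coloring_def by blast
    moreover have "a \<in> star_V n" using ab(1) by (simp add: star_V_def)
    ultimately have "transpose a b a = a" by blast
    with ab(3) show False by simp
  qed
qed

theorem theorem3p2:
  fixes V :: "'a set" and E :: "'a \<Rightarrow> 'a \<Rightarrow> bool"
  assumes "is_tree V E" and "card V \<ge> 2"
  shows "distinguishing_number V E = metric_dim V E + 1 \<longleftrightarrow>
         (\<exists>n\<ge>2. graph_iso V E (path_V n) path_E \<or> graph_iso V E (star_V n) star_E)"
proof
  interpret tree_graph V E using tree_graph_if_is_tree[OF assms(1)] .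
  assume "distinguishing_number V E = metric_dim V E + 1"
  then have "\<not> distinguishing_number V E \<le> metric_dim V E" by simp
  moreover have "n \<ge> 2" if "graph_iso V E (path_V n) path_E" for n
    using that assms(2) unfolding graph_iso_def bij_betw_def path_V_def
    by (metis card_image card_lessThan)
  ultimately show "\<exists>n\<ge>2. graph_iso V E (path_V n) path_E \<or> graph_iso V E (star_V n) star_E"
    using distinguishing_number_le_metric_dim[OF assms(2)] by blast
next
  assume "\<exists>n\<ge>2. graph_iso V E (path_V n) path_E \<or> graph_iso V E (star_V n) star_E"
  then obtain n where "n \<ge> 2" "graph_iso V E (path_V n) path_E \<or> graph_iso V E (star_V n) star_E"
    by blast
  then show "distinguishing_number V E = metric_dim V E + 1"
    using distinguishing_number_graph_iso metric_dim_graph_iso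
      distinguishing_number_path metric_dim_path distinguishing_number_star metric_dim_star
    by force
qed

end
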